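(* The set of lower accumulation points for $2$ runners is exactly $\mathcal{S}(1)=\{1/2\}$, and there are no upper accumulation points for $2$ runners.
   Context: For a real number $x$, $\Vert x\Vert$ denotes the distance from $x$ to the nearest integer. For positive integers $v_1,\ldots,v_n$, $\mathrm{ML}(v_1,\ldots,v_n)=\max_{t\in\mathbb{R}}\min_{1\le i\le n}\Vert t v_i\Vert$. Let $\mathcal{S}(n)=\{\mathrm{ML}(v_1,\ldots,v_n): v_1,\ldots,v_n \text{ positive integers}\}$. A real number $A$ is a lower accumulation point for $n$ runners if $\mathcal{S}(n)$ contains a sequence of elements strictly less than $A$ converging to $A$; it is an upper accumulation point for $n$ runners if $\mathcal{S}(n)$ contains a sequence of elements strictly greater than $A$ converging to $A$. *)

theory Defs
  imports Complex_Main
begin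

definition dist_int :: "real \<Rightarrow> real" where
  "dist_int x = (INF k::int. \<bar>x - real_of_int k\<bar>)"

text \<open>ML(v_1,...,v_n) = max over real t of min over i in {1..n} of dist_int (t v_i).
  The maximum is attained, so it is written as a supremum.\<close>
definition lonely :: "nat \<Rightarrow> (nat \<Rightarrow> nat) \<Rightarrow> real" where
  "lonely n v = (SUP t::real. Min ((\<lambda>i. dist_int (t * real (v i))) ` {1..n}))"

definition S :: "nat \<Rightarrow> real set" where
  "S n = {lonely n v | v. \<forall>i\<in>{1..n}. 0 < v i}"

definition lower_acc :: "nat \<Rightarrow> real \<Rightarrow> bool" where
  "lower_acc n A \<longleftrightarrow> (\<exists>s::nat \<Rightarrow> real. (\<forall>k. s k \<in> S n \<and> s k < A) \<and> s \<longlonglongrightarrow> A)"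

definition upper_acc :: "nat \<Rightarrow> real \<Rightarrow> bool" where
  "upper_acc n A \<longleftrightarrow> (\<exists>s::nat \<Rightarrow> real. (\<forall>k. s k \<in> S n \<and> s k > A) \<and> s \<longlonglongrightarrow> A)"

end

theory Submission
  imports Defs "HOL-Analysis.Elementary_Topology"
begin

(* Write (v1, v2) = g (a, b) with a, b coprime; scaling time by g shows ML(v1, v2) = ML(a, b).
   If a + b is even, a and b are odd and t = 1/2 puts both runners at distance 1/2.
   If a + b = 2m + 1, Bezout gives t with t a = m/(2m+1) and t b = -m/(2m+1) modulo 1, and
   no t does better: the relation b (t a) = a (t b) forbids t a and t b to be both closer than
   1/(2(2m+1)) to half-integers, by a parity argument.  Hence S(2) = {1/2} together with the
   numbers m/(2m+1), m >= 1, which accumulate only at 1/2 and only from below. *)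

lemma dist_int_le: "dist_int x \<le> \<bar>x - of_int k\<bar>"
  unfolding dist_int_def by (rule cINF_lower) (auto intro: bdd_belowI[where m = 0])

lemma dist_int_greatest: "(\<And>k. c \<le> \<bar>x - of_int k\<bar>) \<Longrightarrow> c \<le> dist_int x"
  unfolding dist_int_def by (rule cINF_greatest) auto

lemma dist_int_le_half: "dist_int x \<le> 1/2"
  using dist_int_le[of x "\<lfloor>x\<rfloor>"] dist_int_le[of x "\<lfloor>x\<rfloor> + 1"] by linarith

lemma dist_int_of_int_add:
  assumes "\<bar>r\<bar> \<le> 1/2"
  shows "dist_int (of_int j + r) = \<bar>r\<bar>"
proof (rule antisym)
  show "dist_int (of_int j + r) \<le> \<bar>r\<bar>"
    using dist_int_le[of "of_int j + r" j] by simp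
  show "\<bar>r\<bar> \<le> dist_int (of_int j + r)"
  proof (rule dist_int_greatest)
    fix k :: int
    have "k = j \<or> \<bar>real_of_int (j - k)\<bar> \<ge> 1"
      by (cases "k = j") (auto simp del: of_int_diff)
    then show "\<bar>r\<bar> \<le> \<bar>of_int j + r - of_int k\<bar>"
      using assms by auto
  qed
qed

lemma dist_int_gt_imp_near_half_int:
  assumes "c < dist_int x"
  obtains p :: int where "\<bar>x - (of_int p + 1/2)\<bar> < 1/2 - c"
proof
  show "\<bar>x - (of_int \<lfloor>x\<rfloor> + 1/2)\<bar> < 1/2 - c"
    using assms dist_int_le[of x "\<lfloor>x\<rfloor>"] dist_int_le[of x "\<lfloor>x\<rfloor> + 1"] by linarith
qed

definition ml2 :: "nat \<Rightarrow> nat \<Rightarrow> real" where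
  "ml2 a b = (SUP t::real. min (dist_int (t * a)) (dist_int (t * b)))"

lemma lonely_1: "lonely 1 v = ml2 (v 1) (v 1)"
  unfolding lonely_def ml2_def by simp

lemma lonely_2: "lonely 2 v = ml2 (v 1) (v 2)"
proof -
  have "{1..2::nat} = {1, 2}" by auto
  then show ?thesis unfolding lonely_def ml2_def by simp
qed

lemma ml2_mult:
  assumes "0 < g"
  shows "ml2 (a * g) (b * g) = ml2 a b"
proof -
  let ?f = "\<lambda>t::real. min (dist_int (t * a)) (dist_int (t * b))"
  have "range (\<lambda>t. ?f (t * real g)) = ?f ` range (\<lambda>t. t * real g)"
    by (simp add: image_image)
  also have "range (\<lambda>t. t * real g) = UNIV"
    using assms by (intro surjI[where f = "\<lambda>t. t / real g"]) simp
  finally show ?thesis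
    unfolding ml2_def by (simp add: mult_ac)
qed

lemma min_dist_int_le_odd:
  fixes a b m :: nat and t :: real
  assumes sum: "a + b = 2 * m + 1"
  shows "min (dist_int (t * a)) (dist_int (t * b)) \<le> real m / (2 * real m + 1)"
proof (rule ccontr)
  define n :: real where "n = 2 * real m + 1"
  have n_pos: "0 < n" and n_sum: "real a + real b = n"
    unfolding n_def using arg_cong[OF sum, of real] by simp_all
  have half_minus: "1/2 - m / n = 1 / (2 * n)"
    unfolding n_def by (simp add: field_simps)
  assume "\<not> ?thesis"
  then have "m / n < dist_int (t * a)" "m / n < dist_int (t * b)"
    unfolding n_def by auto
  then obtain p q :: int
    where p: "\<bar>t * a - (p + 1/2)\<bar> < 1 / (2 * n)" and q: "\<bar>t * b - (q + 1/2)\<bar> < 1 / (2 * n)"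
    unfolding half_minus[symmetric] by (metis dist_int_gt_imp_near_half_int)
  define e1 e2 where "e1 = t * a - (p + 1/2)" and "e2 = t * b - (q + 1/2)"
  \<comment> \<open>Since \<open>b (t a) = a (t b)\<close>, the odd integer \<open>D\<close> is twice a number of modulus below \<open>1/2\<close>.\<close>
  define D :: int where "D = 2 * (b * p - a * q) + b - a"
  have "odd D"
    unfolding D_def using sum by presburger
  have D_eq: "real_of_int D = 2 * (a * e2 - b * e1)"
    unfolding D_def e1_def e2_def by (simp add: algebra_simps)
  define \<epsilon> where "\<epsilon> = max \<bar>e1\<bar> \<bar>e2\<bar>"
  have "\<bar>a * e2 - b * e1\<bar> \<le> a * \<bar>e2\<bar> + b * \<bar>e1\<bar>"
    by (simp add: abs_mult abs_triangle_ineq4[THEN order_trans])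
  also have "\<dots> \<le> n * \<epsilon>"
    unfolding n_sum[symmetric] \<epsilon>_def by (simp add: distrib_right add_mono mult_left_mono)
  also have "\<dots> < n * (1 / (2 * n))"
    using p q n_pos unfolding \<epsilon>_def e1_def e2_def by (intro mult_strict_left_mono) auto
  also have "\<dots> = 1/2"
    using n_pos by simp
  finally have "\<bar>real_of_int D\<bar> < 1"
    unfolding D_eq abs_mult by simp
  then have "D = 0"
    by linarith
  with \<open>odd D\<close> show False
    by simp
qed

lemma min_dist_int_attains_odd:
  fixes a b m :: nat
  assumes "coprime a b" and sum: "a + b = 2 * m + 1"
  shows "\<exists>t::real. min (dist_int (t * a)) (dist_int (t * b)) = real m / (2 * real m + 1)"
proof -
  define n :: real where "n = 2 * real m + 1"
  have n_pos: "0 < n" and n_sum: "real a + real b = n"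
    unfolding n_def using arg_cong[OF sum, of real] by simp_all
  have "gcd (int a) (int a + int b) = 1"
    using assms(1) by (simp add: coprime_iff_gcd_eq_1)
  then obtain u v :: int where "u * a + v * (int a + int b) = 1"
    by (metis bezout_int)
  then have uv: "u * real a + v * n = 1"
    unfolding n_sum[symmetric] using arg_cong[of _ _ real_of_int] by fastforce
  define t where "t = m * u / n"
  have "t * a = m * (u * real a) / n"
    unfolding t_def by simp
  also have "\<dots> = m * (1 - v * n) / n"
    using uv by (simp add: eq_diff_eq)
  also have "\<dots> = of_int (- (m * v)) + m / n"
    using n_pos by (simp add: field_simps)
  finally have ta: "t * a = of_int (- (m * v)) + m / n" .
  have "t * b = t * n - t * a"
    unfolding n_sum[symmetric] by (simp add: algebra_simps)
  also have "t * n = of_int (m * u)"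
    unfolding t_def using n_pos by simp
  finally have tb: "t * b = of_int (m * u + m * v) + - (m / n)"
    unfolding ta by simp
  have "\<bar>m / n\<bar> \<le> 1/2"
    using n_pos unfolding n_def by (simp add: field_simps)
  then have "dist_int (t * a) = \<bar>m / n\<bar>" "dist_int (t * b) = \<bar>- (m / n)\<bar>"
    unfolding ta tb by (simp_all only: dist_int_of_int_add abs_minus_cancel)
  then have "min (dist_int (t * a)) (dist_int (t * b)) = m / n"
    using n_pos by simp
  then show ?thesis
    unfolding n_def by blast
qed

lemma min_dist_int_half_even:
  fixes a b :: nat
  assumes "coprime a b" and "even (a + b)"
  shows "min (dist_int (a / 2)) (dist_int (b / 2)) = 1/2"
proof -
  have half_odd: "dist_int (c / 2) = 1/2" if "odd c" for c :: nat
  proof -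
    obtain k where "c = 2 * k + 1"
      using \<open>odd c\<close> oddE by blast
    then have "real c / 2 = of_int (int k) + 1/2"
      by simp
    also have "dist_int \<dots> = 1/2"
      by (simp add: dist_int_of_int_add del: of_int_of_nat_eq)
    finally show ?thesis .
  qed
  have "odd a"
    using assms by (metis coprime_left_2_iff_odd coprime_common_divisor dvd_add_right_iff odd_one)
  moreover have "odd b"
    using \<open>odd a\<close> assms(2) by simp
  ultimately show ?thesis
    using half_odd[of a] half_odd[of b] by simp
qed

lemma ml2_eqI:
  fixes t\<^sub>0 :: real
  assumes "\<And>t. min (dist_int (t * a)) (dist_int (t * b)) \<le> c"
    and "min (dist_int (t\<^sub>0 * a)) (dist_int (t\<^sub>0 * b)) = c"
  shows "ml2 a b = c"
  unfolding ml2_def using assms by (intro cSup_eq_maximum) (auto intro: range_eqI[of c _ t\<^sub>0, OF sym])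

lemma ml2_coprime_odd:
  fixes a b m :: nat
  assumes "coprime a b" and "a + b = 2 * m + 1"
  shows "ml2 a b = real m / (2 * real m + 1)"
  using min_dist_int_attains_odd[OF assms] min_dist_int_le_odd[OF assms(2)]
  by (metis ml2_eqI)

lemma ml2_coprime_even:
  fixes a b :: nat
  assumes "coprime a b" and "even (a + b)"
  shows "ml2 a b = 1/2"
proof (rule ml2_eqI)
  show "min (dist_int (t * a)) (dist_int (t * b)) \<le> 1/2" for t :: real
    using dist_int_le_half by (metis min.coboundedI1)
  show "min (dist_int (1/2 * real a)) (dist_int (1/2 * real b)) = 1/2"
    using min_dist_int_half_even[OF assms] by simp
qed

lemma ml2_cases:
  fixes a b :: nat
  assumes "0 < a" and "0 < b"
  shows "ml2 a b = 1/2 \<or> (\<exists>m::nat. 0 < m \<and> ml2 a b = real m / (2 * real m + 1))"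
proof -
  define g where "g = gcd a b"
  have "0 < g"
    unfolding g_def using assms by simp
  then obtain a' b' where ab: "a = a' * g" "b = b' * g" and "coprime a' b'"
    using gcd_coprime_exists[of a b] unfolding g_def by blast
  then have ml2_eq: "ml2 a b = ml2 a' b'"
    using \<open>0 < g\<close> by (simp add: ml2_mult)
  show ?thesis
  proof (cases "even (a' + b')")
    case True
    then show ?thesis
      unfolding ml2_eq using ml2_coprime_even[OF \<open>coprime a' b'\<close>] by simp
  next
    case False
    then obtain m where m: "a' + b' = 2 * m + 1"
      using oddE by blast
    have "0 < a'" "0 < b'"
      using assms ab by (auto simp: gr0I)
    then have "0 < m"
      using m by linarith
    then show ?thesis
      unfolding ml2_eq using ml2_coprime_odd[OF \<open>coprime a' b'\<close> m] by auto
  qed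
qed

lemma S_1: "S 1 = {1/2}"
proof -
  have "lonely 1 v = 1/2" if "0 < v 1" for v
  proof -
    have "lonely 1 v = ml2 (1 * v 1) (1 * v 1)"
      unfolding lonely_1 by simp
    also have "\<dots> = ml2 1 1"
      using that by (rule ml2_mult)
    also have "\<dots> = 1/2"
      by (rule ml2_coprime_even) auto
    finally show ?thesis .
  qed
  moreover have "0 < (\<lambda>_. 1::nat) 1"
    by simp
  ultimately show ?thesis
    unfolding S_def by fastforce
qed

lemma S_2: "S 2 = insert (1/2) ((\<lambda>m::nat. real m / (2 * real m + 1)) ` {0<..})"
proof (rule equalityI)
  show "S 2 \<subseteq> insert (1/2) ((\<lambda>m::nat. real m / (2 * real m + 1)) ` {0<..})"
  proof
    fix x assume "x \<in> S 2"
    then obtain v :: "nat \<Rightarrow> nat" where "x = lonely 2 v" and "\<forall>i\<in>{1..2}. 0 < v i"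
      unfolding S_def by blast
    then have "x = ml2 (v 1) (v 2)" "0 < v 1" "0 < v 2"
      unfolding lonely_2 by auto
    then show "x \<in> insert (1/2) ((\<lambda>m::nat. real m / (2 * real m + 1)) ` {0<..})"
      using ml2_cases by auto
  qed
next
  have "lonely 2 (\<lambda>_. 1) = 1/2"
    unfolding lonely_2 by (rule ml2_coprime_even) auto
  then have "1/2 \<in> S 2"
    unfolding S_def by fastforce
  moreover have "real m / (2 * real m + 1) \<in> S 2" if "0 < m" for m :: nat
  proof -
    define v :: "nat \<Rightarrow> nat" where "v i = (if i = 1 then 1 else 2 * m)" for i
    have "lonely 2 v = real m / (2 * real m + 1)"
      unfolding lonely_2 v_def by (rule ml2_coprime_odd) auto
    moreover have "\<forall>i\<in>{1..2}. 0 < v i"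
      using that by (simp add: v_def)
    ultimately show ?thesis
      unfolding S_def by (intro CollectI exI[of _ v]) simp
  qed
  ultimately show "insert (1/2) ((\<lambda>m::nat. real m / (2 * real m + 1)) ` {0<..}) \<subseteq> S 2"
    by (auto simp: image_subset_iff)
qed

lemma finite_odd_fractions_below:
  fixes c :: real
  assumes "c < 1/2"
  shows "finite {m::nat. real m / (2 * real m + 1) < c}"
proof (rule finite_subset)
  show "{m::nat. real m / (2 * real m + 1) < c} \<subseteq> {..nat \<lceil>c / (1 - 2 * c)\<rceil>}"
  proof
    fix m :: nat assume "m \<in> {m. real m / (2 * real m + 1) < c}"
    then have "m * (1 - 2 * c) < c"
      by (simp add: field_simps)
    then have "m < c / (1 - 2 * c)"
      using assms by (simp add: field_simps)
    then show "m \<in> {..nat \<lceil>c / (1 - 2 * c)\<rceil>}"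
      by (auto simp: le_nat_iff le_ceiling_iff)
  qed
qed simp

lemma S_2_le_half: "S 2 \<subseteq> {..1/2}"
  unfolding S_2 by (auto simp: field_simps)

lemma islimpt_S_2:
  assumes "A islimpt S 2"
  shows "A = 1/2"
proof -
  have "A islimpt {..1/2}"
    using assms S_2_le_half by (rule islimpt_subset)
  then have "A \<le> 1/2"
    using closed_limpt[of "{..1/2::real}"] by simp
  moreover have "\<not> A < 1/2"
  proof
    assume "A < 1/2"
    define c where "c = (A + 1/2) / 2"
    have "A < c" "c < 1/2"
      using \<open>A < 1/2\<close> unfolding c_def by simp_all
    have "{..<c} \<inter> S 2 \<subseteq> (\<lambda>m::nat. real m / (2 * real m + 1)) ` {m. real m / (2 * real m + 1) < c}"
      using \<open>c < 1/2\<close> unfolding S_2 by (auto simp del: of_nat_add of_nat_mult)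
    moreover have "finite {m::nat. real m / (2 * real m + 1) < c}"
      using \<open>c < 1/2\<close> by (rule finite_odd_fractions_below)
    ultimately have "finite ({..<c} \<inter> S 2)"
      by (meson finite_imageI finite_subset)
    moreover have "infinite ({..<c} \<inter> S 2)"
      using assms \<open>A < c\<close> by (simp add: islimpt_eq_acc_point)
    ultimately show False
      by contradiction
  qed
  ultimately show ?thesis
    by simp
qed

lemma tendsto_in_S_2_imp_half:
  assumes "\<forall>k. s k \<in> S 2 \<and> s k \<noteq> A" and "s \<longlonglongrightarrow> A"
  shows "A = 1/2"
proof -
  have "A islimpt S 2"
    unfolding islimpt_sequential using assms by auto
  then show ?thesis
    by (rule islimpt_S_2)
qed

lemma odd_fractions_tendsto_half: "(\<lambda>k. real (Suc k) / (2 * real (Suc k) + 1)) \<longlonglongrightarrow> 1/2"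
proof -
  define X where "X n = 1/2 * (1 + - inverse (real (Suc n)))" for n
  have "X \<longlonglongrightarrow> 1/2"
    unfolding X_def by (rule LIMSEQ_inverse_real_of_nat_add_minus_mult)
  then have "(\<lambda>n. X (n * 2)) \<longlonglongrightarrow> 1/2"
    by (rule LIMSEQ_linear) simp
  then have "(\<lambda>k. X (Suc k * 2)) \<longlonglongrightarrow> 1/2"
    by (rule LIMSEQ_Suc)
  moreover have "(\<lambda>k. X (Suc k * 2)) = (\<lambda>k. real (Suc k) / (2 * real (Suc k) + 1))"
    unfolding X_def by (auto simp: field_simps)
  ultimately show ?thesis
    by simp
qed

lemma lower_acc_2_iff: "lower_acc 2 A \<longleftrightarrow> A = 1/2"
proof
  assume "lower_acc 2 A"
  then show "A = 1/2"
    unfolding lower_acc_def by (metis tendsto_in_S_2_imp_half less_irrefl)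
next
  assume "A = 1/2"
  let ?s = "\<lambda>k. real (Suc k) / (2 * real (Suc k) + 1)"
  have "?s k \<in> S 2 \<and> ?s k < 1/2" for k
    unfolding S_2 by (force simp: field_simps)
  then show "lower_acc 2 A"
    unfolding lower_acc_def \<open>A = 1/2\<close> using odd_fractions_tendsto_half by (intro exI[of _ ?s]) auto
qed

lemma not_upper_acc_2: "\<not> upper_acc 2 A"
proof
  assume "upper_acc 2 A"
  then obtain s where s: "\<forall>k. s k \<in> S 2 \<and> A < s k" and "s \<longlonglongrightarrow> A"
    unfolding upper_acc_def by blast
  then have "A = 1/2"
    by (metis tendsto_in_S_2_imp_half less_irrefl)
  moreover have "s 0 \<le> 1/2" "A < s 0"
    using s S_2_le_half by auto
  ultimately show False
    by simp
qed

theorem theorem9p3: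
  shows "{A. lower_acc 2 A} = S 1 \<and> S 1 = {1/2} \<and> {A. upper_acc 2 A} = {}"
  using S_1 lower_acc_2_iff not_upper_acc_2 by auto

end
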